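(* Let $p>2$ and suppose the Drift Assumption, the Unbiased Noise Assumption, the $p$-th Moment Noise Assumption and the Lipschitz Assumption hold. Let $u_k=\sqrt{\Phi(x_k-x^\star)}$ and, for a fixed $D>0$, let $$z_k=\max\big(D,\min(2D,u_k)\big)-D\in[0,D].$$ Then there exist constants $\bar\alpha_D>0$ and $b_4>0$ (depending on $D$ but not on $k$) such that for every $k$ with $\alpha_k\le\bar\alpha_D$, $$\mathbb{E}[z_{k+1}^p\mid\mathcal F_k]\le z_k^p+b_4\alpha_k^p\quad\text{a.s.}$$
   Context: Let $\|\cdot\|$ denote the Euclidean norm on $\mathbb{R}^d$ and $\langle\cdot,\cdot\rangle$ the Euclidean inner product. Let $H:\mathbb{R}^d\to\mathbb{R}^d$ and consider the stochastic approximation iteration $x_{k+1}=x_k+\alpha_k\big(H(x_k)-x_k+w_k\big)$, $k\ge 0$, where $x_0$ is an initial point, $(\alpha_k)_{k\ge0}$ are positive step sizes and $(w_k)_{k\ge0}$ are random vectors in $\mathbb{R}^d$ defined on a common probability space. Let $\mathcal F_k=\sigma(x_0,x_1,\dots,x_k)$. Drift Assumption: there is $x^\star\in\mathbb{R}^d$ with $H(x^\star)=x^\star$, a differentiable function $\Phi:\mathbb{R}^d\to[0,\infty)$ and constants $\eta,c_1,c_2,L_2>0$ such that (i) $\langle\nabla\Phi(x-x^\star),H(x)-x\rangle\le-\eta\,\Phi(x-x^\star)$ for all $x\in\mathbb{R}^d$; (ii) $\Phi(y)\le\Phi(x)+\langle\nabla\Phi(x),y-x\rangle+\frac{L_2}{2}\|y-x\|^2$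 for all $x,y\in\mathbb{R}^d$; (iii) $c_1\|x-x^\star\|^2\le\Phi(x-x^\star)\le c_2\|x-x^\star\|^2$ for all $x\in\mathbb{R}^d$. Unbiased Noise Assumption: each $w_k$ is integrable and $\mathbb{E}[w_k\mid\mathcal F_k]=0$ almost surely for all $k\ge0$. $p$-th Moment Noise Assumption (for a given $p>1$): there are constants $A_p>0$, $B_p\ge0$ such that $\mathbb{E}[\|w_k\|^p\mid\mathcal F_k]\le A_p+B_p\|x_k-x^\star\|^p$ almost surely for all $k\ge 0$. Lipschitz Assumption: there is $C>0$ with $\|H(x)-H(y)\|\le C\|x-y\|$ for all $x,y\in\mathbb{R}^d$. *)

theory Defs
  imports "HOL-Probability.Probability"
begin

definition nat_filtration :: "'b measure \<Rightarrow> (nat \<Rightarrow> 'b \<Rightarrow> 'a::topological_space) \<Rightarrow> nat \<Rightarrow> 'b measure" where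
  "nat_filtration M x k =
     sigma (space M) {x i -` A \<inter> space M | i A. i \<le> k \<and> A \<in> sets borel}"

definition clipz :: "real \<Rightarrow> real \<Rightarrow> real" where
  "clipz D u = max D (min (2 * D) u) - D"

end

theory Submission
  imports Defs
begin

(*
  The L2-smoothness of Phi, the drift inequality and the
  tangent bound sqrt s <= (s + u^2) / (2 u) control one step of u:
    u' <= u - alpha eta u / 2 + alpha <grad Phi, w> / (2 u) + L2 alpha^2 |H x - x + w|^2 / (4 u).
  Where u <= 2 D the clipped value z = clipz D u is max 0 (u - D), and a second order expansion
  of t |-> (max 0 t)^p around z gives, for a vector g depending only on x,
    z'^p <= z^p + alpha <g, w> - c alpha z^(p-1) + K (alpha^2 z^(p-2) + alpha^p) (1 + |w|^p);
  large noise (alpha |w| > r) and starting points with u near 0 (where z' = 0) are treated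
  separately, and for u > 2 D simply z' <= D = z.  Conditioning on F_k removes the linear noise
  term, the p-th moment assumption bounds |w|^p, and Young's inequality absorbs
  alpha^2 z^(p-2) into the drift term c alpha z^(p-1) at the price of a multiple of alpha^p.
*)

lemma powr_ge_tangent:
  fixes q c x :: real
  assumes "1 \<le> q" "0 \<le> c" "0 \<le> x"
  shows "c powr q + q * c powr (q - 1) * (x - c) \<le> x powr q"
proof (cases "c = 0")
  case False
  then have "c > 0" using assms by simp
  consider "x = 0" | "x > 0" using assms by linarith
  then show ?thesis
  proof cases
    case 1
    have "c powr q = c powr (q - 1) * c" using \<open>c > 0\<close> by (simp add: powr_diff)
    moreover have "1 * (c powr (q - 1) * c) \<le> q * (c powr (q - 1) * c)"
      using \<open>c > 0\<close> assms(1) by (intro mult_right_mono) auto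
    ultimately show ?thesis using 1 by (simp add: algebra_simps)
  next
    case 2
    have "q * c powr (q - 1) * (x - c) \<le> x powr q - c powr q"
    proof (rule convex_on_imp_above_tangent[where A = "{0<..}"])
      show "((\<lambda>x. x powr q) has_real_derivative q * c powr (q - 1)) (at c within {0<..})"
        by (rule has_field_derivative_at_within[OF has_real_derivative_powr[OF \<open>c > 0\<close>]])
    qed (use \<open>c > 0\<close> 2 powr_convex[OF assms(1)] in \<open>auto simp: interior_open\<close>)
    then show ?thesis by linarith
  qed
qed (use assms in simp)

lemma powr_diff_mult_diff_le:
  fixes q a b :: real
  assumes "1 \<le> q" "0 \<le> a" "0 \<le> b"
  shows "(b powr q - a powr q) * (b - a) \<le> q * max a b powr (q - 1) * (b - a)\<^sup>2"
proof -
  have *: "(t powr q - s powr q) * (t - s) \<le> q * t powr (q - 1) * (t - s)\<^sup>2"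
    if "0 \<le> s" "s \<le> t" for s t :: real
  proof -
    have "t powr q - s powr q \<le> q * t powr (q - 1) * (t - s)"
      using powr_ge_tangent[OF assms(1), of t s] that by (simp add: algebra_simps)
    then have "(t powr q - s powr q) * (t - s) \<le> q * t powr (q - 1) * (t - s) * (t - s)"
      using that by (intro mult_right_mono) auto
    then show ?thesis by (simp add: power2_eq_square mult.assoc)
  qed
  show ?thesis
  proof (cases "a \<le> b")
    case True then show ?thesis using *[of a b] assms by (simp add: max_def)
  next
    case False
    then have "(a powr q - b powr q) * (a - b) \<le> q * a powr (q - 1) * (a - b)\<^sup>2"
      using *[of b a] assms by simp
    then show ?thesis using False by (simp add: max_def power2_commute algebra_simps)
  qed
qed

lemma powr_add_le:
  fixes x y p :: real
  assumes "0 \<le> x" "0 \<le> y" "0 \<le> p"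
  shows "(x + y) powr p \<le> 2 powr p * (x powr p + y powr p)"
proof -
  have "(x + y) powr p \<le> (2 * max x y) powr p" using assms by (intro powr_mono2) auto
  also have "\<dots> = 2 powr p * max x y powr p" using assms by (simp add: powr_mult)
  also have "max x y powr p \<le> x powr p + y powr p"
    by (cases "x \<le> y") (simp_all add: max_def)
  finally show ?thesis by (simp add: mult_left_mono)
qed

lemma powr_minus_one_eq:
  fixes a p :: real
  assumes "0 \<le> a" "1 < p"
  shows "a powr (p - 1) = a * a powr (p - 2)"
  using assms by (cases "a = 0") (simp_all add: powr_diff field_simps power2_eq_square)

lemma abs_powr_sq:
  fixes h p :: real
  assumes "2 \<le> p"
  shows "\<bar>h\<bar> powr (p - 2) * h\<^sup>2 = \<bar>h\<bar> powr p"
  using assms by (cases "h = 0")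
    (simp_all add: powr_diff field_simps flip: powr_realpow[of "\<bar>h\<bar>" 2, simplified])

lemma powr_max0_add_le:
  fixes a h p :: real
  assumes a: "0 \<le> a" and p: "2 < p"
  shows "max 0 (a + h) powr p \<le> a powr p + p * a powr (p - 1) * h
           + (p * (p - 1) * 2 powr (p - 2) + p) * (a powr (p - 2) * h\<^sup>2 + \<bar>h\<bar> powr p)"
    (is "_ \<le> _ + _ + ?K * ?R")
proof -
  have R: "0 \<le> ?R" by simp
  have K: "p \<le> ?K" "p * (p - 1) * 2 powr (p - 2) \<le> ?K" using p by auto
  show ?thesis
  proof (cases "a + h < 0")
    case True
    \<comment> \<open>then \<open>0 \<le> a < -h\<close>, so the linear term is dominated by the quadratic one\<close>
    have "a * a powr (p - 2) * (-h) \<le> (-h) * a powr (p - 2) * (-h)"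
      using True a by (intro mult_right_mono) auto
    then have "p * (a * a powr (p - 2) * (-h)) \<le> p * ((-h) * a powr (p - 2) * (-h))"
      using p by (intro mult_left_mono) auto
    then have "- (p * a powr (p - 1) * h) \<le> p * (a powr (p - 2) * h\<^sup>2)"
      using p a by (simp add: powr_minus_one_eq power2_eq_square algebra_simps)
    also have "\<dots> \<le> ?K * ?R" using K R p by (intro mult_mono) auto
    finally have "- (p * a powr (p - 1) * h) \<le> ?K * ?R" .
    moreover have "max 0 (a + h) powr p = 0" using True by simp
    ultimately show ?thesis using powr_ge_zero[of a p] by linarith
  next
    case False
    define b where "b = a + h"
    have b: "0 \<le> b" using False b_def by simp
    have tangent: "b powr p \<le> a powr p + p * b powr (p - 1) * h"
      using powr_ge_tangent[of p b a] p a b unfolding b_def by (simp add: algebra_simps)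
    have "max a b powr (p - 2) \<le> (a + \<bar>h\<bar>) powr (p - 2)"
      using a b p unfolding b_def by (intro powr_mono2) auto
    also have "\<dots> \<le> 2 powr (p - 2) * (a powr (p - 2) + \<bar>h\<bar> powr (p - 2))"
      using a p by (intro powr_add_le) auto
    finally have max_le: "max a b powr (p - 2) \<le> 2 powr (p - 2) * (a powr (p - 2) + \<bar>h\<bar> powr (p - 2))" .
    have "b - a = h" by (simp add: b_def)
    then have "(b powr (p - 1) - a powr (p - 1)) * h \<le> (p - 1) * max a b powr (p - 2) * h\<^sup>2"
      using powr_diff_mult_diff_le[of "p - 1" a b] p a b by simp
    also have "\<dots> \<le> (p - 1) * (2 powr (p - 2) * (a powr (p - 2) + \<bar>h\<bar> powr (p - 2))) * h\<^sup>2"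
      using max_le p by (intro mult_left_mono mult_right_mono) auto
    finally have "p * ((b powr (p - 1) - a powr (p - 1)) * h)
        \<le> p * ((p - 1) * (2 powr (p - 2) * (a powr (p - 2) + \<bar>h\<bar> powr (p - 2))) * h\<^sup>2)"
      using p by (intro mult_left_mono) auto
    moreover have "p * b powr (p - 1) * h = p * a powr (p - 1) * h + p * ((b powr (p - 1) - a powr (p - 1)) * h)"
      by (simp add: algebra_simps)
    ultimately have "b powr p \<le> a powr p + p * a powr (p - 1) * h
        + p * ((p - 1) * (2 powr (p - 2) * (a powr (p - 2) + \<bar>h\<bar> powr (p - 2))) * h\<^sup>2)"
      using tangent by linarith
    also have "\<dots> = a powr p + p * a powr (p - 1) * h
        + p * (p - 1) * 2 powr (p - 2) * (a powr (p - 2) * h\<^sup>2 + \<bar>h\<bar> powr (p - 2) * h\<^sup>2)"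
      by (simp add: algebra_simps)
    also have "\<dots> = a powr p + p * a powr (p - 1) * h + p * (p - 1) * 2 powr (p - 2) * ?R"
      using abs_powr_sq[of p h] p by simp
    also have "\<dots> \<le> a powr p + p * a powr (p - 1) * h + ?K * ?R"
      using K R by (intro add_left_mono mult_right_mono) auto
    finally show ?thesis using b unfolding b_def by simp
  qed
qed

lemma absorb_second_order:
  fixes m c a \<alpha> p :: real
  assumes "0 < m" "0 < c" "0 \<le> a" "0 < \<alpha>" "2 < p"
  shows "m * \<alpha>\<^sup>2 * a powr (p - 2) \<le> c * \<alpha> * a powr (p - 1) + m * (m / c) powr (p - 2) * \<alpha> powr p"
proof -
  have nonneg: "0 \<le> c * \<alpha> * a powr (p - 1)" "0 \<le> m * (m / c) powr (p - 2) * \<alpha> powr p"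
    using assms by simp_all
  show ?thesis
  proof (cases "m / c * \<alpha> \<le> a")
    case True
    have "m * \<alpha>\<^sup>2 * a powr (p - 2) = c * \<alpha> * (m / c * \<alpha> * a powr (p - 2))"
      using assms by (simp add: power2_eq_square field_simps)
    also have "\<dots> \<le> c * \<alpha> * (a * a powr (p - 2))"
      using True assms by (intro mult_left_mono mult_right_mono) auto
    also have "\<dots> = c * \<alpha> * a powr (p - 1)" using assms by (simp add: powr_minus_one_eq)
    finally show ?thesis using nonneg by linarith
  next
    case False
    have "a powr (p - 2) \<le> (m / c) powr (p - 2) * \<alpha> powr (p - 2)"
      using False assms by (simp add: powr_mono2 flip: powr_mult)
    then have "m * \<alpha>\<^sup>2 * a powr (p - 2) \<le> m * (m / c) powr (p - 2) * (\<alpha> powr 2 * \<alpha> powr (p - 2))"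
      using assms by (simp add: mult_left_mono powr_realpow algebra_simps)
    also have "\<alpha> powr 2 * \<alpha> powr (p - 2) = \<alpha> powr p" by (simp flip: powr_add)
    finally show ?thesis using nonneg by linarith
  qed
qed

lemma one_plus_sq_le:
  fixes n p :: real
  assumes "0 \<le> n" "2 \<le> p"
  shows "(1 + n)\<^sup>2 \<le> 4 * (1 + n powr p)"
proof -
  have "n\<^sup>2 \<le> 1 + n powr p"
  proof (cases "n \<le> 1")
    case True
    then have "n\<^sup>2 \<le> 1" using assms by (simp add: power_le_one)
    then show ?thesis using powr_ge_zero[of n p] by linarith
  next
    case False
    then have "n\<^sup>2 = n powr 2" by (simp add: powr_realpow)
    also have "\<dots> \<le> n powr p" using False assms by (intro powr_mono) auto
    finally show ?thesis by simp
  qed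
  have "(1 + n)\<^sup>2 \<le> 2 * (1 + n\<^sup>2)"
    using zero_le_power2[of "1 - n"] by (simp add: power2_eq_square algebra_simps)
  also have "\<dots> \<le> 4 * (1 + n powr p)"
    using \<open>n\<^sup>2 \<le> 1 + n powr p\<close> powr_ge_zero[of n p] by argo
  finally show ?thesis .
qed

lemma one_plus_powr_le:
  fixes n p :: real
  assumes "0 \<le> n" "0 \<le> p"
  shows "(1 + n) powr p \<le> 2 powr p * (1 + n powr p)"
  using powr_add_le[of 1 n p] assms by simp

lemma clipz_nonneg: "0 \<le> clipz D u"
  unfolding clipz_def by simp

lemma clipz_le: "0 \<le> D \<Longrightarrow> clipz D u \<le> D"
  unfolding clipz_def by simp

lemma clipz_le_max: "clipz D u \<le> max 0 (u - D)"
  unfolding clipz_def by simp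

lemma clipz_eq_max: "u \<le> 2 * D \<Longrightarrow> clipz D u = max 0 (u - D)"
  unfolding clipz_def by simp

lemma clipz_eq_bound: "0 \<le> D \<Longrightarrow> 2 * D \<le> u \<Longrightarrow> clipz D u = D"
  unfolding clipz_def by simp

lemma clipz_eq_0: "u \<le> D \<Longrightarrow> clipz D u = 0"
  unfolding clipz_def by simp

lemma gradient_norm_sq_le:
  fixes f :: "'a::real_inner \<Rightarrow> real"
  assumes smooth: "\<And>x y. f y \<le> f x + inner (f' x) (y - x) + L / 2 * (norm (y - x))\<^sup>2"
    and nonneg: "\<And>x. 0 \<le> f x" and L: "0 < L"
  shows "(norm (f' x))\<^sup>2 \<le> 2 * L * f x"
proof -
  \<comment> \<open>evaluate the quadratic upper bound at the gradient step \<open>x - f' x / L\<close>\<close>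
  have "0 \<le> f (x - (1 / L) *\<^sub>R f' x)" by (rule nonneg)
  also have "\<dots> \<le> f x - (norm (f' x))\<^sup>2 / (2 * L)"
    using smooth[of "x - (1 / L) *\<^sub>R f' x" x] L
    by (simp add: power2_eq_square field_simps flip: power2_norm_eq_inner)
  finally show ?thesis using L by (simp add: field_simps)
qed

lemma continuous_on_gderiv:
  assumes "\<And>x. GDERIV f x :> f' x"
  shows "continuous_on UNIV f"
  using assms unfolding gderiv_def
  by (intro continuous_at_imp_continuous_on ballI has_derivative_continuous) blast

lemma borel_measurable_gradient:
  fixes f :: "'a::euclidean_space \<Rightarrow> real"
  assumes grad: "\<And>x. GDERIV f x :> f' x"
  shows "f' \<in> borel_measurable borel"
proof -
  have [measurable]: "f \<in> borel_measurable borel"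
    by (rule borel_measurable_continuous_onI[OF continuous_on_gderiv[OF grad]])
  have "(\<lambda>x. inner (f' x) i) \<in> borel_measurable borel" for i
  proof (rule borel_measurable_LIMSEQ_real)
    fix x
    have "((\<lambda>t. f (x + t *\<^sub>R i)) has_real_derivative inner i (f' x)) (at 0)"
    proof -
      have "((\<lambda>t. x + t *\<^sub>R i) has_derivative (\<lambda>t. t *\<^sub>R i)) (at 0)"
        by (auto intro!: derivative_eq_intros)
      moreover have "(f has_derivative (\<lambda>h. inner h (f' x))) (at (x + 0 *\<^sub>R i))"
        using grad[of x] unfolding gderiv_def by simp
      ultimately have "((\<lambda>t. f (x + t *\<^sub>R i)) has_derivative (\<lambda>t. inner (t *\<^sub>R i) (f' x))) (at 0)"
        by (rule has_derivative_compose[unfolded o_def])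
      moreover have "(\<lambda>t. inner (t *\<^sub>R i) (f' x)) = (*) (inner i (f' x))"
        by (simp add: fun_eq_iff inner_commute)
      ultimately show ?thesis by (simp add: has_field_derivative_def)
    qed
    then have "((\<lambda>t. (f (x + t *\<^sub>R i) - f x) / t) \<longlongrightarrow> inner i (f' x)) (at 0)"
      unfolding DERIV_def by simp
    moreover have "filterlim (\<lambda>n. 1 / real (Suc n)) (at 0) sequentially"
      unfolding filterlim_at using LIMSEQ_inverse_real_of_nat by (simp add: inverse_eq_divide)
    ultimately show "(\<lambda>n. (f (x + (1 / real (Suc n)) *\<^sub>R i) - f x) / (1 / real (Suc n)))
        \<longlonglongrightarrow> inner (f' x) i"
      by (auto dest: filterlim_compose simp: o_def inner_commute)
  qed measurable
  then show ?thesis by (subst borel_measurable_euclidean_space) auto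
qed

lemma borel_measurable_iterates:
  fixes x w :: "nat \<Rightarrow> 'b \<Rightarrow> 'a::euclidean_space"
  assumes [measurable]: "H \<in> borel_measurable borel" "x 0 \<in> borel_measurable M" "\<And>k. w k \<in> borel_measurable M"
    and rec: "\<And>k \<omega>. \<omega> \<in> space M \<Longrightarrow> x (Suc k) \<omega> = x k \<omega> + \<alpha> k *\<^sub>R (H (x k \<omega>) - x k \<omega> + w k \<omega>)"
  shows "x k \<in> borel_measurable M"
proof (induction k)
  case (Suc k)
  note [measurable] = Suc
  have "(\<lambda>\<omega>. x k \<omega> + \<alpha> k *\<^sub>R (H (x k \<omega>) - x k \<omega> + w k \<omega>)) \<in> borel_measurable M" by measurable
  then show ?case using rec by (subst measurable_cong) auto
qed simp

lemma space_nat_filtration [simp]: "space (nat_filtration M x k) = space M"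
  unfolding nat_filtration_def by (simp add: space_measure_of_conv)

lemma sets_nat_filtration:
  "sets (nat_filtration M x k) = sigma_sets (space M) {x i -` A \<inter> space M | i A. i \<le> k \<and> A \<in> sets borel}"
  unfolding nat_filtration_def by (subst sets_measure_of_conv) auto

lemma subalgebra_nat_filtration:
  assumes "\<And>i. x i \<in> borel_measurable M"
  shows "subalgebra M (nat_filtration M x k)"
  unfolding subalgebra_def sets_nat_filtration
  using assms by (auto intro!: sets.sigma_sets_subset intro: measurable_sets)

lemma measurable_nat_filtration:
  fixes x :: "nat \<Rightarrow> 'b \<Rightarrow> 'a::topological_space"
  assumes "i \<le> k"
  shows "x i \<in> borel_measurable (nat_filtration M x k)"
proof (rule measurableI)
  fix A :: "'a set" assume "A \<in> sets borel"
  then show "x i -` A \<inter> space (nat_filtration M x k) \<in> sets (nat_filtration M x k)"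
    unfolding sets_nat_filtration space_nat_filtration using assms
    by (intro sigma_sets.Basic) blast
qed simp

section \<open>Conditional expectation of a noisy bound\<close>

context sigma_finite_subalgebra
begin

lemma nn_cond_exp_eq_real_cond_exp:
  assumes "integrable M f" "\<And>x. 0 \<le> f x"
  shows "AE x in M. nn_cond_exp M F (\<lambda>x. ennreal (f x)) x = ennreal (real_cond_exp M F f x)"
proof -
  have [measurable]: "f \<in> borel_measurable M" using assms(1) by (rule borel_measurable_integrable)
  have neg: "(\<lambda>x. ennreal (- f x)) = (\<lambda>_. 0)" using assms(2) by (simp add: ennreal_neg)
  have "(\<integral>\<^sup>+ x. nn_cond_exp M F (\<lambda>x. ennreal (f x)) x \<partial>M) = (\<integral>\<^sup>+ x. ennreal (f x) \<partial>M)"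
    using nn_cond_exp_intg[of "\<lambda>_. 1" "\<lambda>x. ennreal (f x)"] by simp
  then have "AE x in M. nn_cond_exp M F (\<lambda>x. ennreal (f x)) x \<noteq> \<infinity>"
    using assms(1) by (intro nn_integral_PInf_AE) auto
  moreover have "AE x in M. 0 = nn_cond_exp M F (\<lambda>_. 0) x" by (rule nn_cond_exp_F_meas) simp
  ultimately show ?thesis
    unfolding real_cond_exp_def neg by eventually_elim (simp add: less_top)
qed

lemma real_cond_exp_le_of_nn_cond_exp_le:
  assumes "AE x in M. nn_cond_exp M F (\<lambda>x. ennreal (f x)) x \<le> ennreal (m x)" "\<And>x. 0 \<le> m x"
  shows "AE x in M. real_cond_exp M F f x \<le> m x"
  using assms(1)
proof eventually_elim
  case (elim x)
  then have "enn2real (nn_cond_exp M F (\<lambda>x. ennreal (f x)) x) \<le> m x"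
    using assms(2) by (intro enn2real_leI) auto
  then show ?case
    unfolding real_cond_exp_def using enn2real_nonneg[of "nn_cond_exp M F (\<lambda>x. ennreal (- f x)) x"]
    by linarith
qed

lemma real_cond_exp_inner_eq_0:
  fixes w g :: "'a \<Rightarrow> 'b::euclidean_space"
  assumes w: "integrable M w" and g [measurable]: "g \<in> borel_measurable F" and bound: "\<And>x. norm (g x) \<le> G"
    and centred: "\<And>i. i \<in> Basis \<Longrightarrow> AE x in M. real_cond_exp M F (\<lambda>x. inner (w x) i) x = 0"
  shows "integrable M (\<lambda>x. inner (g x) (w x))"
    and "AE x in M. real_cond_exp M F (\<lambda>x. inner (g x) (w x)) x = 0"
proof -
  have gM [measurable]: "g \<in> borel_measurable M" by (rule measurable_from_subalg[OF subalg g])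
  have [measurable]: "w \<in> borel_measurable M" using w by (rule borel_measurable_integrable)
  have int: "integrable M (\<lambda>x. inner (g x) i * inner (w x) i)" for i
  proof (rule Bochner_Integration.integrable_bound)
    show "integrable M (\<lambda>x. (G * norm i) * inner (w x) i)"
      using w by (intro integrable_mult_right integrable_inner_left)
    show "AE x in M. norm (inner (g x) i * inner (w x) i) \<le> norm ((G * norm i) * inner (w x) i)"
    proof (rule AE_I2)
      fix x
      have "\<bar>inner (g x) i\<bar> \<le> norm (g x) * norm i" by (rule Cauchy_Schwarz_ineq2)
      also have "\<dots> \<le> G * norm i" using bound[of x] by (rule mult_right_mono) simp
      finally have "\<bar>inner (g x) i\<bar> * \<bar>inner (w x) i\<bar> \<le> \<bar>G * norm i\<bar> * \<bar>inner (w x) i\<bar>"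
        by (intro mult_right_mono) auto
      then show "norm (inner (g x) i * inner (w x) i) \<le> norm ((G * norm i) * inner (w x) i)"
        by (simp add: abs_mult)
    qed
  qed measurable
  have sum_eq: "(\<lambda>x. inner (g x) (w x)) = (\<lambda>x. \<Sum>i\<in>Basis. inner (g x) i * inner (w x) i)"
    by (rule ext) (rule euclidean_inner)
  show "integrable M (\<lambda>x. inner (g x) (w x))"
    unfolding sum_eq by (intro Bochner_Integration.integrable_sum int)
  have "AE x in M. real_cond_exp M F (\<lambda>x. inner (g x) i * inner (w x) i) x = 0" if "i \<in> Basis" for i
  proof -
    have "AE x in M. real_cond_exp M F (\<lambda>x. inner (g x) i * inner (w x) i) x
        = inner (g x) i * real_cond_exp M F (\<lambda>x. inner (w x) i) x"
      by (rule real_cond_exp_mult) (use int in auto)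
    with centred[OF that] show ?thesis by eventually_elim simp
  qed
  then have "AE x in M. \<forall>i\<in>Basis. real_cond_exp M F (\<lambda>x. inner (g x) i * inner (w x) i) x = 0"
    by (simp add: eventually_ball_finite)
  moreover have "AE x in M. real_cond_exp M F (\<lambda>x. \<Sum>i\<in>Basis. inner (g x) i * inner (w x) i) x
      = (\<Sum>i\<in>Basis. real_cond_exp M F (\<lambda>x. inner (g x) i * inner (w x) i) x)"
    by (rule real_cond_exp_sum) (rule int)
  ultimately show "AE x in M. real_cond_exp M F (\<lambda>x. inner (g x) (w x)) x = 0"
    unfolding sum_eq by eventually_elim simp
qed

lemma real_cond_exp_mult_le:
  assumes kappa [measurable]: "\<kappa> \<in> borel_measurable F" and kappa_nonneg: "\<And>x. 0 \<le> \<kappa> x"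
    and V [measurable]: "V \<in> borel_measurable M" and V_nonneg: "\<And>x. 0 \<le> V x"
    and moment: "AE x in M. nn_cond_exp M F (\<lambda>x. ennreal (V x)) x \<le> ennreal (m x)"
    and m_nonneg: "\<And>x. 0 \<le> m x"
    and int: "integrable M (\<lambda>x. \<kappa> x * m x)"
  shows "integrable M (\<lambda>x. \<kappa> x * V x)"
    and "AE x in M. real_cond_exp M F (\<lambda>x. \<kappa> x * V x) x \<le> \<kappa> x * m x"
proof -
  have [measurable]: "\<kappa> \<in> borel_measurable M" by (rule measurable_from_subalg[OF subalg kappa])
  have "(\<integral>\<^sup>+ x. ennreal (\<kappa> x * V x) \<partial>M) = (\<integral>\<^sup>+ x. ennreal (\<kappa> x) * ennreal (V x) \<partial>M)"
    using kappa_nonneg V_nonneg by (simp add: ennreal_mult)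
  also have "\<dots> = (\<integral>\<^sup>+ x. ennreal (\<kappa> x) * nn_cond_exp M F (\<lambda>x. ennreal (V x)) x \<partial>M)"
    by (rule nn_cond_exp_intg[symmetric]) measurable
  also have "\<dots> \<le> (\<integral>\<^sup>+ x. ennreal (\<kappa> x) * ennreal (m x) \<partial>M)"
    using moment by (intro nn_integral_mono_AE) (auto elim!: eventually_mono intro: mult_left_mono)
  also have "\<dots> = (\<integral>\<^sup>+ x. ennreal (norm (\<kappa> x * m x)) \<partial>M)"
    using kappa_nonneg m_nonneg by (simp add: ennreal_mult abs_mult)
  also have "\<dots> < \<infinity>" using int by (simp add: integrable_iff_bounded)
  finally show int_kV: "integrable M (\<lambda>x. \<kappa> x * V x)"
    using kappa_nonneg V_nonneg by (intro integrableI_nonneg) auto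
  have "AE x in M. real_cond_exp M F (\<lambda>x. \<kappa> x * V x) x = \<kappa> x * real_cond_exp M F V x"
    by (rule real_cond_exp_mult) (use int_kV in auto)
  moreover have "AE x in M. real_cond_exp M F V x \<le> m x"
    by (rule real_cond_exp_le_of_nn_cond_exp_le[OF moment m_nonneg])
  ultimately show "AE x in M. real_cond_exp M F (\<lambda>x. \<kappa> x * V x) x \<le> \<kappa> x * m x"
    by eventually_elim (simp add: kappa_nonneg mult_left_mono)
qed

lemma nn_cond_exp_le_of_noisy_bound:
  fixes w g :: "'a \<Rightarrow> 'b::euclidean_space"
  assumes Y: "integrable M Y" "\<And>x. 0 \<le> Y x"
    and Z: "integrable M Z" "Z \<in> borel_measurable F"
    and w: "integrable M w" "\<And>i. i \<in> Basis \<Longrightarrow> AE x in M. real_cond_exp M F (\<lambda>x. inner (w x) i) x = 0"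
    and g: "g \<in> borel_measurable F" "\<And>x. norm (g x) \<le> G"
    and kappa: "\<kappa> \<in> borel_measurable F" "\<And>x. 0 \<le> \<kappa> x"
    and V: "V \<in> borel_measurable M" "\<And>x. 0 \<le> V x"
    and moment: "AE x in M. nn_cond_exp M F (\<lambda>x. ennreal (V x)) x \<le> ennreal (m x)" "\<And>x. 0 \<le> m x"
      "integrable M (\<lambda>x. \<kappa> x * m x)"
    and bound: "\<And>x. x \<in> space M \<Longrightarrow> Y x \<le> Z x + inner (g x) (w x) + \<kappa> x * V x"
  shows "AE x in M. nn_cond_exp M F (\<lambda>x. ennreal (Y x)) x \<le> ennreal (Z x + \<kappa> x * m x)"
proof -
  have linear: "integrable M (\<lambda>x. inner (g x) (w x))"
    "AE x in M. real_cond_exp M F (\<lambda>x. inner (g x) (w x)) x = 0"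
    using real_cond_exp_inner_eq_0[OF w(1) g] w(2) by blast+
  note quadratic = real_cond_exp_mult_le[OF kappa V moment]
  have int_ZL: "integrable M (\<lambda>x. Z x + inner (g x) (w x))" using Z(1) linear(1) by simp
  have "AE x in M. real_cond_exp M F Y x
      \<le> real_cond_exp M F (\<lambda>x. Z x + inner (g x) (w x) + \<kappa> x * V x) x"
    using bound Y(1) int_ZL quadratic(1) by (intro real_cond_exp_mono) auto
  moreover have "AE x in M. real_cond_exp M F (\<lambda>x. Z x + inner (g x) (w x) + \<kappa> x * V x) x
      = real_cond_exp M F (\<lambda>x. Z x + inner (g x) (w x)) x + real_cond_exp M F (\<lambda>x. \<kappa> x * V x) x"
    by (rule real_cond_exp_add[OF int_ZL quadratic(1)])
  moreover have "AE x in M. real_cond_exp M F (\<lambda>x. Z x + inner (g x) (w x)) x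
      = real_cond_exp M F Z x + real_cond_exp M F (\<lambda>x. inner (g x) (w x)) x"
    by (rule real_cond_exp_add[OF Z(1) linear(1)])
  moreover have "AE x in M. real_cond_exp M F Z x = Z x" by (rule real_cond_exp_F_meas[OF Z])
  moreover note linear(2) quadratic(2) nn_cond_exp_eq_real_cond_exp[OF Y]
  ultimately show ?thesis by eventually_elim (auto intro: ennreal_leI)
qed

end

section \<open>One step of the clipped Lyapunov function\<close>

locale lyapunov_drift =
  fixes H :: "'a::euclidean_space \<Rightarrow> 'a"
    and xstar :: 'a
    and Phi :: "'a \<Rightarrow> real"
    and gradPhi :: "'a \<Rightarrow> 'a"
    and eta c1 c2 L2 p C D :: real
  assumes p_gt: "p > 2"
    and fix_pt: "H xstar = xstar"
    and Phi_nonneg: "\<And>x. Phi x \<ge> 0"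
    and Phi_grad: "\<And>x. GDERIV Phi x :> gradPhi x"
    and eta_pos: "eta > 0" and c1_pos: "c1 > 0" and c2_pos: "c2 > 0" and L2_pos: "L2 > 0"
    and drift: "\<And>x. inner (gradPhi (x - xstar)) (H x - x) \<le> - eta * Phi (x - xstar)"
    and smooth: "\<And>x y. Phi y \<le> Phi x + inner (gradPhi x) (y - x) + L2 / 2 * (norm (y - x))\<^sup>2"
    and sandwich: "\<And>x. c1 * (norm (x - xstar))\<^sup>2 \<le> Phi (x - xstar) \<and> Phi (x - xstar) \<le> c2 * (norm (x - xstar))\<^sup>2"
    and C_pos: "C > 0" and lipschitz: "\<And>x y. norm (H x - H y) \<le> C * norm (x - y)"
    and D_pos: "D > 0"
begin

definition lyap_sqrt :: "'a \<Rightarrow> real" where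
  "lyap_sqrt y = sqrt (Phi (y - xstar))"

lemma lyap_sqrt_nonneg: "0 \<le> lyap_sqrt y"
  unfolding lyap_sqrt_def using Phi_nonneg by simp

lemma lyap_sqrt_sq: "(lyap_sqrt y)\<^sup>2 = Phi (y - xstar)"
  unfolding lyap_sqrt_def using Phi_nonneg by simp

lemma norm_le_lyap_sqrt: "sqrt c1 * norm (y - xstar) \<le> lyap_sqrt y"
proof -
  have "sqrt (c1 * (norm (y - xstar))\<^sup>2) \<le> lyap_sqrt y"
    unfolding lyap_sqrt_def using sandwich[of y] by simp
  then show ?thesis using c1_pos by (simp add: real_sqrt_mult)
qed

lemma lyap_sqrt_le_norm: "lyap_sqrt y \<le> sqrt c2 * norm (y - xstar)"
proof -
  have "lyap_sqrt y \<le> sqrt (c2 * (norm (y - xstar))\<^sup>2)"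
    unfolding lyap_sqrt_def using sandwich[of y] by simp
  then show ?thesis using c2_pos by (simp add: real_sqrt_mult)
qed

lemma norm_le_of_lyap_sqrt_le: "lyap_sqrt y \<le> R \<Longrightarrow> norm (y - xstar) \<le> R / sqrt c1"
  using norm_le_lyap_sqrt[of y] c1_pos by (simp add: field_simps)

lemma norm_gradPhi_le: "norm (gradPhi (y - xstar)) \<le> sqrt (2 * L2) * lyap_sqrt y"
proof -
  have "(norm (gradPhi (y - xstar)))\<^sup>2 \<le> 2 * L2 * (lyap_sqrt y)\<^sup>2"
    unfolding lyap_sqrt_sq by (rule gradient_norm_sq_le[OF smooth Phi_nonneg L2_pos])
  then have "sqrt ((norm (gradPhi (y - xstar)))\<^sup>2) \<le> sqrt (2 * L2 * (lyap_sqrt y)\<^sup>2)"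
    by (rule real_sqrt_le_mono)
  then show ?thesis using lyap_sqrt_nonneg[of y] L2_pos by (simp add: real_sqrt_mult)
qed

lemma norm_drift_le: "norm (H y - y) \<le> (C + 1) * norm (y - xstar)"
proof -
  have "norm (H y - y) \<le> norm (H y - H xstar) + norm (y - xstar)"
    using fix_pt norm_triangle_ineq4[of "H y - H xstar" "y - xstar"] by simp
  also have "\<dots> \<le> C * norm (y - xstar) + norm (y - xstar)" using lipschitz[of y xstar] by simp
  finally show ?thesis by (simp add: algebra_simps)
qed

definition lyap_sqrt_incr :: "real \<Rightarrow> 'a \<Rightarrow> 'a \<Rightarrow> real" where
  "lyap_sqrt_incr \<alpha> y v = - \<alpha> * eta * lyap_sqrt y / 2 + \<alpha> * inner (gradPhi (y - xstar)) v / (2 * lyap_sqrt y)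
     + L2 * \<alpha>\<^sup>2 * (norm (H y - y + v))\<^sup>2 / (4 * lyap_sqrt y)"

lemma lyap_sqrt_step_le:
  assumes u: "0 < lyap_sqrt y" and \<alpha>: "0 < \<alpha>"
  shows "lyap_sqrt (y + \<alpha> *\<^sub>R (H y - y + v)) \<le> lyap_sqrt y + lyap_sqrt_incr \<alpha> y v"
proof -
  define u where "u = lyap_sqrt y"
  define g where "g = gradPhi (y - xstar)"
  define s where "s = H y - y + v"
  define P' where "P' = Phi (y + \<alpha> *\<^sub>R s - xstar)"
  have "P' \<le> u\<^sup>2 + inner g (\<alpha> *\<^sub>R s) + L2 / 2 * (norm (\<alpha> *\<^sub>R s))\<^sup>2"
    using smooth[of "y + \<alpha> *\<^sub>R s - xstar" "y - xstar"] unfolding P'_def u_def g_def lyap_sqrt_sq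
    by simp
  also have "inner g (\<alpha> *\<^sub>R s) = \<alpha> * inner g (H y - y) + \<alpha> * inner g v"
    unfolding s_def by (simp add: inner_add_right algebra_simps)
  also have "\<alpha> * inner g (H y - y) \<le> - \<alpha> * eta * u\<^sup>2"
    using mult_left_mono[OF drift[of y], of \<alpha>] \<alpha> unfolding g_def u_def lyap_sqrt_sq by simp
  finally have P': "P' \<le> u\<^sup>2 - \<alpha> * eta * u\<^sup>2 + \<alpha> * inner g v + L2 / 2 * \<alpha>\<^sup>2 * (norm s)\<^sup>2"
    using \<alpha> by (simp add: power_mult_distrib)
  \<comment> \<open>\<open>sqrt P' \<le> (P' + u\<^sup>2) / (2 * u)\<close> linearises the square root at \<open>u\<^sup>2\<close>\<close>
  have "2 * u * sqrt P' \<le> P' + u\<^sup>2"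
    using zero_le_power2[of "sqrt P' - u"] Phi_nonneg unfolding P'_def
    by (simp add: power2_eq_square algebra_simps)
  then have "sqrt P' \<le> (P' + u\<^sup>2) / (2 * u)" using u unfolding u_def by (simp add: field_simps)
  also have "\<dots> \<le> (2 * u\<^sup>2 - \<alpha> * eta * u\<^sup>2 + \<alpha> * inner g v + L2 / 2 * \<alpha>\<^sup>2 * (norm s)\<^sup>2) / (2 * u)"
    using P' u unfolding u_def by (intro divide_right_mono) auto
  also have "\<dots> = u + lyap_sqrt_incr \<alpha> y v"
    using u unfolding lyap_sqrt_incr_def u_def g_def s_def by (simp add: field_simps power2_eq_square)
  finally show ?thesis unfolding P'_def s_def u_def lyap_sqrt_def[of "y + _"] .
qed

definition clipped_lyap :: "'a \<Rightarrow> real" where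
  "clipped_lyap y = clipz D (lyap_sqrt y)"

text \<open>The gradient of \<open>y \<mapsto> clipped_lyap y powr p\<close> where \<open>D < lyap_sqrt y < 2 * D\<close>, by the chain rule
  through \<open>lyap_sqrt = sqrt \<circ> Phi\<close>; it is set to \<open>0\<close> above the clipping band.\<close>

definition clipped_pow_grad :: "'a \<Rightarrow> 'a" where
  "clipped_pow_grad y = (if lyap_sqrt y \<le> 2 * D
     then (p * clipped_lyap y powr (p - 1) / (2 * lyap_sqrt y)) *\<^sub>R gradPhi (y - xstar) else 0)"

definition drift_rate :: real where
  "drift_rate = p * eta * D / 2"

definition drift_bound :: real where
  "drift_bound = (C + 1) * (2 * D) / sqrt c1"

definition step_majorant :: "real \<Rightarrow> real \<Rightarrow> 'a \<Rightarrow> 'a \<Rightarrow> real" where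
  "step_majorant K \<alpha> y v = clipped_lyap y powr p + \<alpha> * inner (clipped_pow_grad y) v
     - drift_rate * \<alpha> * clipped_lyap y powr (p - 1)
     + K * (\<alpha>\<^sup>2 * clipped_lyap y powr (p - 2) + \<alpha> powr p) * (1 + norm v powr p)"

lemma clipped_lyap_nonneg: "0 \<le> clipped_lyap y"
  unfolding clipped_lyap_def by (rule clipz_nonneg)

lemma powr_clipped_lyap_le: "0 \<le> q \<Longrightarrow> clipped_lyap y powr q \<le> D powr q"
  unfolding clipped_lyap_def using D_pos clipz_nonneg clipz_le by (intro powr_mono2) auto

lemma drift_rate_pos: "0 < drift_rate"
  unfolding drift_rate_def using p_gt eta_pos D_pos by simp

lemma step_majorant_mono: "K \<le> K' \<Longrightarrow> 0 \<le> \<alpha> \<Longrightarrow> step_majorant K \<alpha> y v \<le> step_majorant K' \<alpha> y v"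
  unfolding step_majorant_def by (simp add: mult_right_mono)

lemma norm_clipped_pow_grad_le: "norm (clipped_pow_grad y) \<le> p * D powr (p - 1) * sqrt (2 * L2) / 2"
proof (cases "lyap_sqrt y \<le> 2 * D \<and> lyap_sqrt y \<noteq> 0")
  case True
  then have u: "0 < lyap_sqrt y" using lyap_sqrt_nonneg[of y] by simp
  have "norm (clipped_pow_grad y) = p * clipped_lyap y powr (p - 1) / (2 * lyap_sqrt y) * norm (gradPhi (y - xstar))"
    using True p_gt lyap_sqrt_nonneg[of y] unfolding clipped_pow_grad_def by simp
  also have "\<dots> \<le> p * clipped_lyap y powr (p - 1) / (2 * lyap_sqrt y) * (sqrt (2 * L2) * lyap_sqrt y)"
    using u p_gt L2_pos norm_gradPhi_le by (intro mult_left_mono) auto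
  also have "\<dots> = p * clipped_lyap y powr (p - 1) * sqrt (2 * L2) / 2" using u by simp
  also have "\<dots> \<le> p * D powr (p - 1) * sqrt (2 * L2) / 2"
    using powr_clipped_lyap_le[of "p - 1" y] p_gt L2_pos
    by (intro divide_right_mono mult_right_mono mult_left_mono) auto
  finally show ?thesis .
qed (use p_gt L2_pos in \<open>auto simp: clipped_pow_grad_def\<close>)

lemma clipped_step_far:
  "2 * D \<le> lyap_sqrt y \<Longrightarrow> clipped_lyap y' powr p \<le> clipped_lyap y powr p"
  using powr_clipped_lyap_le[of p y'] D_pos p_gt unfolding clipped_lyap_def by (simp add: clipz_eq_bound)

lemma clipped_step_large_noise:
  assumes r: "0 < r"
  obtains K where "0 \<le> K"
    and "\<And>y v \<alpha>. 0 < \<alpha> \<Longrightarrow> \<alpha> \<le> 1 \<Longrightarrow> r < \<alpha> * norm v \<Longrightarrow>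
           clipped_lyap (y + \<alpha> *\<^sub>R (H y - y + v)) powr p \<le> step_majorant K \<alpha> y v"
proof
  define G where "G = p * D powr (p - 1) * sqrt (2 * L2) / 2"
  define K where "K = (D powr p + G * r + drift_rate * D powr (p - 1)) / r powr p"
  have G: "0 \<le> G" unfolding G_def using p_gt L2_pos by simp
  show "0 \<le> K" unfolding K_def using G r drift_rate_pos by simp
  fix y v :: 'a and \<alpha> :: real assume \<alpha>: "0 < \<alpha>" "\<alpha> \<le> 1" and large: "r < \<alpha> * norm v"
  \<comment> \<open>with \<open>\<alpha> |v| = r t\<close>, \<open>t > 1\<close>, every term is a multiple of \<open>t powr p\<close> at most\<close>
  define t where "t = \<alpha> * norm v / r"
  have t: "1 < t" unfolding t_def using large r by simp
  have "t powr 1 \<le> t powr p" using t p_gt by (intro powr_mono) auto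
  then have t_le: "t \<le> t powr p" using t by simp
  have tp: "1 \<le> t powr p" using t p_gt by (simp add: ge_one_powr_ge_zero)
  have "\<bar>inner (clipped_pow_grad y) v\<bar> \<le> norm (clipped_pow_grad y) * norm v" by (rule Cauchy_Schwarz_ineq2)
  also have "\<dots> \<le> G * norm v" unfolding G_def using norm_clipped_pow_grad_le by (rule mult_right_mono) simp
  finally have "- (\<alpha> * inner (clipped_pow_grad y) v) \<le> \<alpha> * (G * norm v)"
    using mult_left_mono[of "- inner (clipped_pow_grad y) v" "G * norm v" \<alpha>] \<alpha> by simp
  also have "\<dots> = G * r * t" unfolding t_def using r by simp
  also have "\<dots> \<le> G * r * t powr p" using G r t_le by (intro mult_left_mono) auto
  finally have lin: "- (\<alpha> * inner (clipped_pow_grad y) v) \<le> G * r * t powr p" .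
  have drift: "drift_rate * \<alpha> * clipped_lyap y powr (p - 1) \<le> drift_rate * D powr (p - 1) * t powr p"
  proof -
    have "drift_rate * \<alpha> * clipped_lyap y powr (p - 1) \<le> drift_rate * 1 * D powr (p - 1)"
      using \<alpha> drift_rate_pos powr_clipped_lyap_le[of "p - 1" y] p_gt by (intro mult_mono) auto
    also have "\<dots> \<le> drift_rate * D powr (p - 1) * t powr p"
      using mult_left_mono[OF tp, of "drift_rate * D powr (p - 1)"] drift_rate_pos by simp
    finally show ?thesis .
  qed
  have "r powr p * t powr p = (r * t) powr p" using r t by (simp add: powr_mult)
  also have "r * t = \<alpha> * norm v" unfolding t_def using r by simp
  finally have "K * r powr p * t powr p = K * (\<alpha> powr p * norm v powr p)"
    using \<alpha> by (simp add: powr_mult mult.assoc)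
  also have "\<dots> \<le> K * ((\<alpha>\<^sup>2 * clipped_lyap y powr (p - 2) + \<alpha> powr p) * (1 + norm v powr p))"
    using \<open>0 \<le> K\<close> by (intro mult_left_mono) (auto simp: algebra_simps)
  finally have quad: "K * r powr p * t powr p
      \<le> K * (\<alpha>\<^sup>2 * clipped_lyap y powr (p - 2) + \<alpha> powr p) * (1 + norm v powr p)"
    by (simp add: mult.assoc)
  have "clipped_lyap (y + \<alpha> *\<^sub>R (H y - y + v)) powr p \<le> D powr p"
    using powr_clipped_lyap_le p_gt by simp
  also have "\<dots> \<le> D powr p * t powr p" using tp D_pos by (simp add: mult_le_cancel_left1)
  also have "\<dots> = (K * r powr p - G * r - drift_rate * D powr (p - 1)) * t powr p"
    unfolding K_def using r by simp
  also have "\<dots> = K * r powr p * t powr p - G * r * t powr p - drift_rate * D powr (p - 1) * t powr p"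
    by (simp add: algebra_simps)
  also have "\<dots> \<le> step_majorant K \<alpha> y v"
    using lin drift quad powr_ge_zero[of "clipped_lyap y" p] unfolding step_majorant_def by linarith
  finally show "clipped_lyap (y + \<alpha> *\<^sub>R (H y - y + v)) powr p \<le> step_majorant K \<alpha> y v" .
qed

lemma clipped_step_core:
  assumes u: "lyap_sqrt y \<le> \<delta>" and radii: "sqrt c2 * ((C + 2) * \<delta> / sqrt c1 + r) \<le> D"
    and \<alpha>: "0 < \<alpha>" "\<alpha> \<le> 1" and small: "\<alpha> * norm v \<le> r"
  shows "clipped_lyap (y + \<alpha> *\<^sub>R (H y - y + v)) = 0"
proof -
  have "y + \<alpha> *\<^sub>R (H y - y + v) - xstar = (y - xstar) + \<alpha> *\<^sub>R (H y - y) + \<alpha> *\<^sub>R v"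
    by (simp add: algebra_simps)
  then have "norm (y + \<alpha> *\<^sub>R (H y - y + v) - xstar) \<le> norm (y - xstar) + norm (\<alpha> *\<^sub>R (H y - y)) + norm (\<alpha> *\<^sub>R v)"
    by (metis order_trans[OF norm_triangle_ineq add_right_mono[OF norm_triangle_ineq]])
  also have "\<dots> = norm (y - xstar) + \<alpha> * norm (H y - y) + \<alpha> * norm v" using \<alpha> by simp
  also have "\<dots> \<le> norm (y - xstar) + 1 * ((C + 1) * norm (y - xstar)) + r"
    using \<alpha> norm_drift_le[of y] small by (intro add_mono mult_mono) auto
  also have "\<dots> = (C + 2) * norm (y - xstar) + r" by (simp add: algebra_simps)
  also have "\<dots> \<le> (C + 2) * (\<delta> / sqrt c1) + r"
    using norm_le_of_lyap_sqrt_le[OF u] C_pos by (intro add_right_mono mult_left_mono) auto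
  finally have "sqrt c2 * norm (y + \<alpha> *\<^sub>R (H y - y + v) - xstar) \<le> sqrt c2 * ((C + 2) * \<delta> / sqrt c1 + r)"
    using c2_pos by (intro mult_left_mono) auto
  then have "lyap_sqrt (y + \<alpha> *\<^sub>R (H y - y + v)) \<le> D"
    using lyap_sqrt_le_norm radii by (meson order_trans)
  then show ?thesis unfolding clipped_lyap_def by (rule clipz_eq_0)
qed

lemma drift_bound_nonneg: "0 \<le> drift_bound"
  unfolding drift_bound_def using C_pos D_pos c1_pos by simp

lemma norm_step_le:
  assumes "lyap_sqrt y \<le> 2 * D"
  shows "norm (H y - y + v) \<le> (drift_bound + 1) * (1 + norm v)"
proof -
  have "norm (H y - y) \<le> (C + 1) * norm (y - xstar)" by (rule norm_drift_le)
  also have "\<dots> \<le> (C + 1) * (2 * D / sqrt c1)"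
    using norm_le_of_lyap_sqrt_le[OF assms] C_pos by (intro mult_left_mono) auto
  finally have "norm (H y - y) \<le> drift_bound" unfolding drift_bound_def by simp
  then have "norm (H y - y + v) \<le> drift_bound + norm v"
    using norm_triangle_ineq[of "H y - y" v] by linarith
  also have "\<dots> \<le> (drift_bound + 1) * (1 + norm v)"
    using drift_bound_nonneg by (simp add: algebra_simps)
  finally show ?thesis .
qed

lemma clipped_step_le_expansion:
  fixes y v :: 'a
  assumes u: "0 < lyap_sqrt y" "lyap_sqrt y \<le> 2 * D" and \<alpha>: "0 < \<alpha>"
  defines "a \<equiv> clipped_lyap y" and "h \<equiv> lyap_sqrt_incr \<alpha> y v"
  shows "clipped_lyap (y + \<alpha> *\<^sub>R (H y - y + v)) powr p
    \<le> a powr p + p * a powr (p - 1) * h + (p * (p - 1) * 2 powr (p - 2) + p) * (a powr (p - 2) * h\<^sup>2 + \<bar>h\<bar> powr p)"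
proof -
  have "lyap_sqrt (y + \<alpha> *\<^sub>R (H y - y + v)) - D \<le> a + h"
    using lyap_sqrt_step_le[OF u(1) \<alpha>, of v] clipz_eq_max[OF u(2)] max.cobounded2[of 0 "lyap_sqrt y - D"]
    unfolding a_def h_def clipped_lyap_def by linarith
  then have "clipped_lyap (y + \<alpha> *\<^sub>R (H y - y + v)) \<le> max 0 (a + h)"
    unfolding clipped_lyap_def using clipz_le_max by (meson max.mono order.refl order_trans)
  then have "clipped_lyap (y + \<alpha> *\<^sub>R (H y - y + v)) powr p \<le> max 0 (a + h) powr p"
    using clipped_lyap_nonneg p_gt by (intro powr_mono2) auto
  also have "\<dots> \<le> a powr p + p * a powr (p - 1) * h
      + (p * (p - 1) * 2 powr (p - 2) + p) * (a powr (p - 2) * h\<^sup>2 + \<bar>h\<bar> powr p)"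
    unfolding a_def by (rule powr_max0_add_le[OF clipped_lyap_nonneg p_gt])
  finally show ?thesis .
qed

lemma abs_lyap_sqrt_incr_le:
  assumes \<delta>: "0 < \<delta>" "\<delta> \<le> lyap_sqrt y" and u: "lyap_sqrt y \<le> 2 * D"
    and \<alpha>: "0 < \<alpha>" "\<alpha> \<le> 1" and small: "\<alpha> * norm v \<le> r"
  shows "\<bar>lyap_sqrt_incr \<alpha> y v\<bar>
    \<le> \<alpha> * (eta * D + sqrt (2 * L2) / 2 + L2 * (drift_bound + 1)\<^sup>2 * (1 + r) / (4 * \<delta>)) * (1 + norm v)"
proof -
  define u where "u = lyap_sqrt y"
  define n where "n = norm v"
  define B where "B = (drift_bound + 1)\<^sup>2"
  have u0: "0 < u" and u\<delta>: "\<delta> \<le> u" using \<delta> unfolding u_def by auto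
  have n0: "0 \<le> n" unfolding n_def by simp
  have r0: "0 \<le> r" using small \<alpha> n0 unfolding n_def by (meson mult_nonneg_nonneg less_imp_le order_trans)
  have "\<bar>- \<alpha> * eta * u / 2\<bar> \<le> \<alpha> * (eta * D)"
    using \<alpha> eta_pos u0 u unfolding u_def by (simp add: abs_mult field_simps mult_left_mono)
  moreover have "\<bar>\<alpha> * inner (gradPhi (y - xstar)) v / (2 * u)\<bar> \<le> \<alpha> * (sqrt (2 * L2) / 2 * n)"
  proof -
    have "\<bar>inner (gradPhi (y - xstar)) v\<bar> \<le> norm (gradPhi (y - xstar)) * n"
      unfolding n_def by (rule Cauchy_Schwarz_ineq2)
    also have "\<dots> \<le> sqrt (2 * L2) * u * n" unfolding u_def using norm_gradPhi_le n0 by (rule mult_right_mono)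
    finally have "\<alpha> * \<bar>inner (gradPhi (y - xstar)) v\<bar> / (2 * u) \<le> \<alpha> * (sqrt (2 * L2) * u * n) / (2 * u)"
      using \<alpha> u0 by (intro divide_right_mono mult_left_mono) auto
    then show ?thesis using \<alpha> u0 by (simp add: abs_mult)
  qed
  moreover have "\<bar>L2 * \<alpha>\<^sup>2 * (norm (H y - y + v))\<^sup>2 / (4 * u)\<bar> \<le> \<alpha> * (L2 * B * (1 + r) / (4 * \<delta>) * (1 + n))"
  proof -
    \<comment> \<open>one factor \<open>\<alpha> (1 + n)\<close> is bounded by \<open>1 + r\<close>, which keeps the bound linear in the noise\<close>
    have "\<alpha> * (1 + n) \<le> 1 + r" using \<alpha> small unfolding n_def by (simp add: algebra_simps)
    then have sq: "(\<alpha> * (1 + n))\<^sup>2 \<le> (1 + r) * (\<alpha> * (1 + n))"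
      using \<alpha> n0 unfolding power2_eq_square by (intro mult_right_mono) auto
    have "\<alpha>\<^sup>2 * (norm (H y - y + v))\<^sup>2 \<le> \<alpha>\<^sup>2 * (B * (1 + n)\<^sup>2)"
      using norm_step_le[OF u, of v] drift_bound_nonneg unfolding B_def n_def
      by (intro mult_left_mono) (auto simp flip: power_mult_distrib intro: power_mono)
    also have "\<dots> = B * (\<alpha> * (1 + n))\<^sup>2" by (simp add: power_mult_distrib)
    also have "\<dots> \<le> B * ((1 + r) * (\<alpha> * (1 + n)))" using sq unfolding B_def by (intro mult_left_mono) auto
    finally have "L2 * (\<alpha>\<^sup>2 * (norm (H y - y + v))\<^sup>2) / (4 * u) \<le> L2 * (B * ((1 + r) * (\<alpha> * (1 + n)))) / (4 * \<delta>)"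
      using L2_pos u0 u\<delta> \<delta> \<alpha> n0 r0 unfolding B_def
      by (intro frac_le mult_left_mono mult_nonneg_nonneg) auto
    then show ?thesis using L2_pos u0 \<delta> by (simp add: abs_mult field_simps)
  qed
  ultimately have "\<bar>lyap_sqrt_incr \<alpha> y v\<bar>
      \<le> \<alpha> * (eta * D) + \<alpha> * (sqrt (2 * L2) / 2 * n) + \<alpha> * (L2 * B * (1 + r) / (4 * \<delta>) * (1 + n))"
    unfolding lyap_sqrt_incr_def u_def by linarith
  also have "\<dots> = \<alpha> * (eta * D + sqrt (2 * L2) / 2 * n + L2 * B * (1 + r) / (4 * \<delta>) * (1 + n))"
    by (simp add: algebra_simps)
  also have "\<dots> \<le> \<alpha> * ((eta * D + sqrt (2 * L2) / 2 + L2 * B * (1 + r) / (4 * \<delta>)) * (1 + n))"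
  proof (rule mult_left_mono)
    define s where "s = sqrt (2 * L2) / 2"
    define T where "T = L2 * B * (1 + r) / (4 * \<delta>)"
    have "0 \<le> eta * D * n" "0 \<le> s" using eta_pos D_pos n0 L2_pos unfolding s_def by simp_all
    then have "eta * D + s * n + T * (1 + n) \<le> (eta * D + s + T) * (1 + n)"
      by (simp add: algebra_simps)
    then show "eta * D + sqrt (2 * L2) / 2 * n + L2 * B * (1 + r) / (4 * \<delta>) * (1 + n)
        \<le> (eta * D + sqrt (2 * L2) / 2 + L2 * B * (1 + r) / (4 * \<delta>)) * (1 + n)"
      unfolding s_def T_def .
  qed (use \<alpha> in simp)
  finally show ?thesis unfolding B_def n_def by (simp only: mult.assoc)
qed

lemma first_order_term_le:
  fixes y v :: 'a
  assumes \<delta>: "0 < \<delta>" "\<delta> \<le> lyap_sqrt y" and u: "lyap_sqrt y \<le> 2 * D" and \<alpha>: "0 < \<alpha>"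
  defines "a \<equiv> clipped_lyap y"
  shows "p * a powr (p - 1) * lyap_sqrt_incr \<alpha> y v
    \<le> \<alpha> * inner (clipped_pow_grad y) v - drift_rate * \<alpha> * a powr (p - 1)
      + \<alpha>\<^sup>2 * a powr (p - 2) * (p * L2 * D * (drift_bound + 1)\<^sup>2 / \<delta>) * (1 + norm v powr p)"
proof -
  define u where "u = lyap_sqrt y"
  define Q where "Q = (norm (H y - y + v))\<^sup>2"
  have u0: "0 < u" and u\<delta>: "\<delta> \<le> u" using \<delta> unfolding u_def by auto
  have a0: "0 \<le> a" unfolding a_def by (rule clipped_lyap_nonneg)
  have a_eq: "a = max 0 (u - D)" unfolding a_def u_def clipped_lyap_def using u by (rule clipz_eq_max)
  have "p * a powr (p - 1) * lyap_sqrt_incr \<alpha> y v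
      = - (p * eta / 2 * \<alpha> * (a powr (p - 1) * u)) + \<alpha> * inner (clipped_pow_grad y) v
        + p * L2 * \<alpha>\<^sup>2 / 4 * (a powr (p - 1) * Q / u)"
    using u u0 unfolding lyap_sqrt_incr_def clipped_pow_grad_def a_def u_def Q_def
    by (simp add: field_simps)
  \<comment> \<open>the drift term: \<open>z > 0\<close> forces \<open>u = z + D \<ge> D\<close>\<close>
  moreover have "drift_rate * \<alpha> * a powr (p - 1) \<le> p * eta / 2 * \<alpha> * (a powr (p - 1) * u)"
  proof -
    have "D \<le> u \<or> a = 0" using a_eq by auto
    then have "D * a powr (p - 1) \<le> a powr (p - 1) * u"
      using mult_right_mono[of D u "a powr (p - 1)"] by (auto simp: mult.commute)
    then show ?thesis unfolding drift_rate_def using p_gt eta_pos \<alpha> by (simp add: mult_left_mono)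
  qed
  moreover have "p * L2 * \<alpha>\<^sup>2 / 4 * (a powr (p - 1) * Q / u)
      \<le> \<alpha>\<^sup>2 * a powr (p - 2) * (p * L2 * D * (drift_bound + 1)\<^sup>2 / \<delta>) * (1 + norm v powr p)"
  proof -
    have "a powr (p - 1) \<le> D * a powr (p - 2)"
      using a0 p_gt clipz_le[of D] D_pos unfolding a_def clipped_lyap_def
      by (simp add: powr_minus_one_eq mult_right_mono)
    moreover have "Q \<le> (drift_bound + 1)\<^sup>2 * (4 * (1 + norm v powr p))"
    proof -
      have "Q \<le> ((drift_bound + 1) * (1 + norm v))\<^sup>2"
        unfolding Q_def using norm_step_le[OF u] by (intro power_mono) auto
      also have "\<dots> \<le> (drift_bound + 1)\<^sup>2 * (4 * (1 + norm v powr p))"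
        unfolding power_mult_distrib using one_plus_sq_le[of "norm v" p] p_gt by (intro mult_left_mono) auto
      finally show ?thesis .
    qed
    ultimately have "a powr (p - 1) * Q \<le> D * a powr (p - 2) * ((drift_bound + 1)\<^sup>2 * (4 * (1 + norm v powr p)))"
      unfolding Q_def using a0 D_pos by (intro mult_mono) auto
    then have "a powr (p - 1) * Q / u \<le> D * a powr (p - 2) * ((drift_bound + 1)\<^sup>2 * (4 * (1 + norm v powr p))) / \<delta>"
      using u0 u\<delta> \<delta> a0 D_pos unfolding Q_def by (intro frac_le mult_nonneg_nonneg) auto
    then have "a powr (p - 1) * Q / u \<le> a powr (p - 2) * (4 * D * (drift_bound + 1)\<^sup>2 / \<delta>) * (1 + norm v powr p)"
      by (simp add: field_simps)
    then have "p * L2 * \<alpha>\<^sup>2 / 4 * (a powr (p - 1) * Q / u)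
        \<le> p * L2 * \<alpha>\<^sup>2 / 4 * (a powr (p - 2) * (4 * D * (drift_bound + 1)\<^sup>2 / \<delta>) * (1 + norm v powr p))"
      using p_gt L2_pos by (intro mult_left_mono) auto
    also have "\<dots> = \<alpha>\<^sup>2 * a powr (p - 2) * (p * L2 * D * (drift_bound + 1)\<^sup>2 / \<delta>) * (1 + norm v powr p)"
      using \<delta> by (simp add: field_simps)
    finally show ?thesis .
  qed
  ultimately show ?thesis by linarith
qed

lemma clipped_step_taylor:
  assumes r: "0 < r" and \<delta>: "0 < \<delta>"
  obtains K where "0 \<le> K"
    and "\<And>y v \<alpha>. 0 < \<alpha> \<Longrightarrow> \<alpha> \<le> 1 \<Longrightarrow> \<delta> \<le> lyap_sqrt y \<Longrightarrow> lyap_sqrt y \<le> 2 * D \<Longrightarrow>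
           \<alpha> * norm v \<le> r \<Longrightarrow> clipped_lyap (y + \<alpha> *\<^sub>R (H y - y + v)) powr p \<le> step_majorant K \<alpha> y v"
proof
  define K0 where "K0 = p * (p - 1) * 2 powr (p - 2) + p"
  define K1 where "K1 = eta * D + sqrt (2 * L2) / 2 + L2 * (drift_bound + 1)\<^sup>2 * (1 + r) / (4 * \<delta>)"
  define K2 where "K2 = p * L2 * D * (drift_bound + 1)\<^sup>2 / \<delta>"
  define K where "K = K2 + 4 * K0 * K1\<^sup>2 + 2 powr p * K0 * K1 powr p"
  have K0: "0 \<le> K0" unfolding K0_def using p_gt by simp
  have K1: "0 \<le> K1" unfolding K1_def using eta_pos D_pos L2_pos r \<delta> by simp
  have K2: "0 \<le> K2" unfolding K2_def using p_gt L2_pos D_pos \<delta> by simp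
  show "0 \<le> K" unfolding K_def using K0 K1 K2 by simp
  fix y v :: 'a and \<alpha> :: real
  assume \<alpha>: "0 < \<alpha>" "\<alpha> \<le> 1" and u: "\<delta> \<le> lyap_sqrt y" "lyap_sqrt y \<le> 2 * D" and small: "\<alpha> * norm v \<le> r"
  define a where "a = clipped_lyap y"
  define h where "h = lyap_sqrt_incr \<alpha> y v"
  define N where "N = 1 + norm v powr p"
  have a0: "0 \<le> a" unfolding a_def by (rule clipped_lyap_nonneg)
  have h: "\<bar>h\<bar> \<le> \<alpha> * K1 * (1 + norm v)"
    unfolding h_def K1_def using abs_lyap_sqrt_incr_le[OF \<delta> u \<alpha> small] .
  have "clipped_lyap (y + \<alpha> *\<^sub>R (H y - y + v)) powr p
      \<le> a powr p + p * a powr (p - 1) * h + K0 * (a powr (p - 2) * h\<^sup>2 + \<bar>h\<bar> powr p)"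
    unfolding a_def h_def K0_def using \<delta> u \<alpha> by (intro clipped_step_le_expansion) auto
  moreover have "p * a powr (p - 1) * h
      \<le> \<alpha> * inner (clipped_pow_grad y) v - drift_rate * \<alpha> * a powr (p - 1) + \<alpha>\<^sup>2 * a powr (p - 2) * K2 * N"
    unfolding a_def h_def K2_def N_def by (rule first_order_term_le[OF \<delta> u \<alpha>(1)])
  moreover have "K0 * (a powr (p - 2) * h\<^sup>2) \<le> \<alpha>\<^sup>2 * a powr (p - 2) * (4 * K0 * K1\<^sup>2) * N"
  proof -
    have "h\<^sup>2 \<le> (\<alpha> * K1 * (1 + norm v))\<^sup>2" using h by (metis abs_ge_zero power2_abs power_mono)
    also have "\<dots> = \<alpha>\<^sup>2 * K1\<^sup>2 * (1 + norm v)\<^sup>2" by (simp add: power_mult_distrib)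
    also have "\<dots> \<le> \<alpha>\<^sup>2 * K1\<^sup>2 * (4 * N)"
      unfolding N_def using one_plus_sq_le[of "norm v" p] p_gt by (intro mult_left_mono) auto
    finally have "K0 * (a powr (p - 2) * h\<^sup>2) \<le> K0 * (a powr (p - 2) * (\<alpha>\<^sup>2 * K1\<^sup>2 * (4 * N)))"
      using K0 by (intro mult_left_mono) auto
    then show ?thesis by (simp add: algebra_simps)
  qed
  moreover have "K0 * \<bar>h\<bar> powr p \<le> \<alpha> powr p * (2 powr p * K0 * K1 powr p) * N"
  proof -
    have "\<bar>h\<bar> powr p \<le> (\<alpha> * K1 * (1 + norm v)) powr p" using h p_gt by (intro powr_mono2) auto
    also have "\<dots> = \<alpha> powr p * K1 powr p * (1 + norm v) powr p" using \<alpha> K1 by (simp add: powr_mult)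
    also have "\<dots> \<le> \<alpha> powr p * K1 powr p * (2 powr p * N)"
      unfolding N_def using one_plus_powr_le[of "norm v" p] p_gt by (intro mult_left_mono) auto
    finally have "K0 * \<bar>h\<bar> powr p \<le> K0 * (\<alpha> powr p * K1 powr p * (2 powr p * N))"
      using K0 by (intro mult_left_mono) auto
    then show ?thesis by (simp add: algebra_simps)
  qed
  moreover have "\<alpha>\<^sup>2 * a powr (p - 2) * K2 * N + \<alpha>\<^sup>2 * a powr (p - 2) * (4 * K0 * K1\<^sup>2) * N
      + \<alpha> powr p * (2 powr p * K0 * K1 powr p) * N \<le> K * (\<alpha>\<^sup>2 * a powr (p - 2) + \<alpha> powr p) * N"
  proof -
    have N: "0 \<le> N" unfolding N_def by simp
    have "\<alpha>\<^sup>2 * a powr (p - 2) * (K2 + 4 * K0 * K1\<^sup>2) * N \<le> \<alpha>\<^sup>2 * a powr (p - 2) * K * N"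
      unfolding K_def using K0 K1 N by (intro mult_right_mono mult_left_mono) auto
    moreover have "\<alpha> powr p * (2 powr p * K0 * K1 powr p) * N \<le> \<alpha> powr p * K * N"
      unfolding K_def using K2 K0 K1 N by (intro mult_right_mono mult_left_mono) auto
    ultimately show ?thesis by (simp add: algebra_simps)
  qed
  ultimately show "clipped_lyap (y + \<alpha> *\<^sub>R (H y - y + v)) powr p \<le> step_majorant K \<alpha> y v"
    unfolding step_majorant_def a_def[symmetric] N_def[symmetric] by (simp add: algebra_simps)
qed

lemma clipped_step_bound:
  obtains K where "0 < K"
    and "\<And>y v \<alpha>. 0 < \<alpha> \<Longrightarrow> \<alpha> \<le> 1 \<Longrightarrow> lyap_sqrt y \<le> 2 * D \<Longrightarrow>
           clipped_lyap (y + \<alpha> *\<^sub>R (H y - y + v)) powr p \<le> step_majorant K \<alpha> y v"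
proof -
  \<comment> \<open>\<open>r\<close> and \<open>\<delta>\<close> are chosen so that \<open>lyap_sqrt y \<le> \<delta>\<close> and \<open>\<alpha> |v| \<le> r\<close> keep the next point below \<open>D\<close>\<close>
  define r where "r = D / (2 * sqrt c2)"
  define \<delta> where "\<delta> = min D (D * sqrt c1 / (2 * sqrt c2 * (C + 2)))"
  have r: "0 < r" unfolding r_def using D_pos c2_pos by simp
  have \<delta>: "0 < \<delta>" "\<delta> \<le> D" unfolding \<delta>_def using D_pos c1_pos c2_pos C_pos by auto
  have radii: "sqrt c2 * ((C + 2) * \<delta> / sqrt c1 + r) \<le> D"
  proof -
    have "\<delta> \<le> D * sqrt c1 / (2 * sqrt c2 * (C + 2))" unfolding \<delta>_def by simp
    moreover have "0 < 2 * sqrt c2 * (C + 2)" using c2_pos C_pos by simp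
    ultimately have "\<delta> * (2 * sqrt c2 * (C + 2)) \<le> D * sqrt c1" by (simp add: pos_le_divide_eq)
    then have "sqrt c2 * (C + 2) * \<delta> / sqrt c1 \<le> D / 2"
      using c1_pos by (simp add: field_simps)
    moreover have "sqrt c2 * r = D / 2" unfolding r_def using c2_pos by simp
    moreover have "sqrt c2 * ((C + 2) * \<delta> / sqrt c1 + r) = sqrt c2 * (C + 2) * \<delta> / sqrt c1 + sqrt c2 * r"
      by (simp add: algebra_simps)
    ultimately show ?thesis by linarith
  qed
  obtain K1 where K1: "0 \<le> K1"
    and large: "\<And>y v \<alpha>. 0 < \<alpha> \<Longrightarrow> \<alpha> \<le> 1 \<Longrightarrow> r < \<alpha> * norm v \<Longrightarrow>
           clipped_lyap (y + \<alpha> *\<^sub>R (H y - y + v)) powr p \<le> step_majorant K1 \<alpha> y v"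
    using clipped_step_large_noise[OF r] by blast
  obtain K2 where K2: "0 \<le> K2"
    and taylor: "\<And>y v \<alpha>. 0 < \<alpha> \<Longrightarrow> \<alpha> \<le> 1 \<Longrightarrow> \<delta> \<le> lyap_sqrt y \<Longrightarrow> lyap_sqrt y \<le> 2 * D \<Longrightarrow>
           \<alpha> * norm v \<le> r \<Longrightarrow> clipped_lyap (y + \<alpha> *\<^sub>R (H y - y + v)) powr p \<le> step_majorant K2 \<alpha> y v"
    using clipped_step_taylor[OF r \<delta>(1)] by blast
  show thesis
  proof
    show "0 < K1 + K2 + 1" using K1 K2 by simp
    fix y v :: 'a and \<alpha> :: real
    assume \<alpha>: "0 < \<alpha>" "\<alpha> \<le> 1" and u: "lyap_sqrt y \<le> 2 * D"
    consider "r < \<alpha> * norm v" | "\<alpha> * norm v \<le> r" "lyap_sqrt y \<le> \<delta>" | "\<alpha> * norm v \<le> r" "\<delta> \<le> lyap_sqrt y"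
      by linarith
    then show "clipped_lyap (y + \<alpha> *\<^sub>R (H y - y + v)) powr p \<le> step_majorant (K1 + K2 + 1) \<alpha> y v"
    proof cases
      case 1
      then show ?thesis
        using large[OF \<alpha> 1, of y] step_majorant_mono[of K1 "K1 + K2 + 1" \<alpha> y v] K2 \<alpha> by linarith
    next
      case 2
      have "clipped_lyap y = 0" unfolding clipped_lyap_def using 2 \<delta> by (intro clipz_eq_0) simp
      then have "0 \<le> step_majorant (K1 + K2 + 1) \<alpha> y v"
        using K1 K2 \<alpha> unfolding step_majorant_def clipped_pow_grad_def by simp
      then show ?thesis using clipped_step_core[OF 2(2) radii \<alpha> 2(1)] p_gt by simp
    next
      case 3
      then show ?thesis
        using taylor[OF \<alpha> 3(2) u 3(1)] step_majorant_mono[of K2 "K1 + K2 + 1" \<alpha> y v] K1 \<alpha> by linarith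
    qed
  qed
qed

section \<open>Conditioning on the past\<close>

lemma H_borel [measurable]: "H \<in> borel_measurable borel"
proof -
  have "C-lipschitz_on UNIV H"
    by (rule lipschitz_onI) (use lipschitz C_pos in \<open>auto simp: dist_norm\<close>)
  then show ?thesis by (intro borel_measurable_continuous_onI lipschitz_on_continuous_on)
qed

lemma gradPhi_borel [measurable]: "gradPhi \<in> borel_measurable borel"
  by (rule borel_measurable_gradient[OF Phi_grad])

lemma Phi_borel [measurable]: "Phi \<in> borel_measurable borel"
  by (rule borel_measurable_continuous_onI[OF continuous_on_gderiv[OF Phi_grad]])

lemma lyap_sqrt_borel [measurable]: "lyap_sqrt \<in> borel_measurable borel"
  unfolding lyap_sqrt_def by measurable

lemma clipped_lyap_borel [measurable]: "clipped_lyap \<in> borel_measurable borel"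
  unfolding clipped_lyap_def clipz_def by measurable

lemma clipped_pow_grad_borel [measurable]: "clipped_pow_grad \<in> borel_measurable borel"
  unfolding clipped_pow_grad_def by measurable

definition moment_bound :: "real \<Rightarrow> real \<Rightarrow> real" where
  "moment_bound A B = A + B * (2 * D / sqrt c1) powr p"

definition clip_noise_const :: "real \<Rightarrow> real \<Rightarrow> real \<Rightarrow> real" where
  "clip_noise_const K A B =
     K * (1 + moment_bound A B) * ((K * (1 + moment_bound A B) / drift_rate) powr (p - 2) + 1)"

lemma moment_bound_ge:
  "0 \<le> B \<Longrightarrow> lyap_sqrt y \<le> 2 * D \<Longrightarrow> A + B * norm (y - xstar) powr p \<le> moment_bound A B"
  unfolding moment_bound_def using norm_le_of_lyap_sqrt_le[of y "2 * D"] p_gt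
  by (intro add_left_mono mult_left_mono powr_mono2) auto

lemma moment_bound_nonneg: "0 \<le> A \<Longrightarrow> 0 \<le> B \<Longrightarrow> 0 \<le> moment_bound A B"
  unfolding moment_bound_def by simp

lemma clip_noise_const_pos: "0 < K \<Longrightarrow> 0 \<le> A \<Longrightarrow> 0 \<le> B \<Longrightarrow> 0 < clip_noise_const K A B"
  unfolding clip_noise_const_def using moment_bound_nonneg[of A B]
  by (intro mult_pos_pos add_nonneg_pos add_pos_nonneg) auto

lemma drift_absorbs_remainder:
  assumes K: "0 < K" and \<alpha>: "0 < \<alpha>" and u: "lyap_sqrt y \<le> 2 * D" and AB: "0 \<le> A" "0 \<le> B"
  defines "a \<equiv> clipped_lyap y"
  shows "a powr p - drift_rate * \<alpha> * a powr (p - 1)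
      + K * (\<alpha>\<^sup>2 * a powr (p - 2) + \<alpha> powr p) * (1 + (A + B * norm (y - xstar) powr p))
    \<le> a powr p + clip_noise_const K A B * \<alpha> powr p"
proof -
  define m where "m = K * (1 + moment_bound A B)"
  have m: "0 < m" unfolding m_def using K moment_bound_nonneg[OF AB] by simp
  have "K * (\<alpha>\<^sup>2 * a powr (p - 2) + \<alpha> powr p) * (1 + (A + B * norm (y - xstar) powr p))
      \<le> K * (\<alpha>\<^sup>2 * a powr (p - 2) + \<alpha> powr p) * (1 + moment_bound A B)"
    using moment_bound_ge[OF AB(2) u] K by (intro mult_left_mono) auto
  also have "\<dots> = m * \<alpha>\<^sup>2 * a powr (p - 2) + m * \<alpha> powr p" unfolding m_def by (simp add: algebra_simps)
  also have "m * \<alpha>\<^sup>2 * a powr (p - 2) \<le> drift_rate * \<alpha> * a powr (p - 1) + m * (m / drift_rate) powr (p - 2) * \<alpha> powr p"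
    unfolding a_def by (rule absorb_second_order[OF m drift_rate_pos clipped_lyap_nonneg \<alpha> p_gt])
  finally show ?thesis unfolding clip_noise_const_def m_def[symmetric] by (simp add: algebra_simps)
qed

lemma clipped_cond_step:
  fixes M :: "'b measure" and x w :: "nat \<Rightarrow> 'b \<Rightarrow> 'a" and \<alpha> :: "nat \<Rightarrow> real" and k :: nat
  assumes K: "0 < K"
    and step: "\<And>y v \<alpha>. 0 < \<alpha> \<Longrightarrow> \<alpha> \<le> 1 \<Longrightarrow> lyap_sqrt y \<le> 2 * D \<Longrightarrow>
                 clipped_lyap (y + \<alpha> *\<^sub>R (H y - y + v)) powr p \<le> step_majorant K \<alpha> y v"
    and AB: "0 \<le> A" "0 \<le> B"
    and M: "prob_space M"
    and x0: "x 0 \<in> borel_measurable M" and w_meas: "\<forall>k. w k \<in> borel_measurable M"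
    and rec: "\<forall>k. \<forall>\<omega>\<in>space M. x (Suc k) \<omega> = x k \<omega> + \<alpha> k *\<^sub>R (H (x k \<omega>) - x k \<omega> + w k \<omega>)"
    and w_int: "integrable M (w k)"
    and centred: "\<forall>i\<in>Basis. AE \<omega> in M. real_cond_exp M (nat_filtration M x k) (\<lambda>\<omega>. inner (w k \<omega>) i) \<omega> = 0"
    and moment: "AE \<omega> in M. nn_cond_exp M (nat_filtration M x k) (\<lambda>\<omega>. ennreal (norm (w k \<omega>) powr p)) \<omega>
                   \<le> ennreal (A + B * norm (x k \<omega> - xstar) powr p)"
    and \<alpha>: "0 < \<alpha> k" "\<alpha> k \<le> 1"
  shows "AE \<omega> in M. nn_cond_exp M (nat_filtration M x k) (\<lambda>\<omega>. ennreal (clipped_lyap (x (Suc k) \<omega>) powr p)) \<omega>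
           \<le> ennreal (clipped_lyap (x k \<omega>) powr p + clip_noise_const K A B * \<alpha> k powr p)"
proof -
  interpret prob_space M by (rule M)
  define F where "F = nat_filtration M x k"
  have x_meas [measurable]: "x i \<in> borel_measurable M" for i
    by (rule borel_measurable_iterates[where x = x and w = w and \<alpha> = \<alpha>, OF H_borel x0])
      (use w_meas rec in auto)
  have [measurable]: "w k \<in> borel_measurable M" using w_meas by simp
  have "subalgebra M F" unfolding F_def by (rule subalgebra_nat_filtration[OF x_meas])
  then interpret F: finite_measure_subalgebra M F
    by (simp add: finite_measure_subalgebra_def finite_measure_subalgebra_axioms_def finite_measure_axioms)
  have [measurable]: "x k \<in> borel_measurable F" unfolding F_def by (rule measurable_nat_filtration) simp
  define a where "a = \<alpha> k"
  define Z where "Z \<omega> = clipped_lyap (x k \<omega>) powr p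
    - (if lyap_sqrt (x k \<omega>) \<le> 2 * D then drift_rate * a * clipped_lyap (x k \<omega>) powr (p - 1) else 0)" for \<omega>
  define \<kappa> where "\<kappa> \<omega> = (if lyap_sqrt (x k \<omega>) \<le> 2 * D
    then K * (a\<^sup>2 * clipped_lyap (x k \<omega>) powr (p - 2) + a powr p) else 0)" for \<omega>
  define m where "m \<omega> = 1 + (A + B * norm (x k \<omega> - xstar) powr p)" for \<omega>
  have a: "0 < a" "a \<le> 1" unfolding a_def using \<alpha> by auto
  have \<kappa>_nonneg: "0 \<le> \<kappa> \<omega>" for \<omega> unfolding \<kappa>_def using K by simp
  have "AE \<omega> in M. nn_cond_exp M F (\<lambda>\<omega>. ennreal (clipped_lyap (x (Suc k) \<omega>) powr p)) \<omega>
      \<le> ennreal (Z \<omega> + \<kappa> \<omega> * m \<omega>)"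
  proof (rule F.nn_cond_exp_le_of_noisy_bound[where w = "w k" and g = "\<lambda>\<omega>. a *\<^sub>R clipped_pow_grad (x k \<omega>)"
        and V = "\<lambda>\<omega>. 1 + norm (w k \<omega>) powr p" and G = "p * D powr (p - 1) * sqrt (2 * L2) / 2"])
    show "integrable M (\<lambda>\<omega>. clipped_lyap (x (Suc k) \<omega>) powr p)"
      by (rule integrable_const_bound[where B = "D powr p"]) (use powr_clipped_lyap_le p_gt in auto)
    show "integrable M Z"
    proof (rule integrable_const_bound[where B = "D powr p + drift_rate * D powr (p - 1)"])
      show "AE \<omega> in M. norm (Z \<omega>) \<le> D powr p + drift_rate * D powr (p - 1)"
      proof (rule AE_I2)
        fix \<omega>
        have "drift_rate * a * clipped_lyap (x k \<omega>) powr (p - 1) \<le> drift_rate * 1 * D powr (p - 1)"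
          using a drift_rate_pos powr_clipped_lyap_le[of "p - 1" "x k \<omega>"] p_gt by (intro mult_mono) auto
        moreover have "0 \<le> drift_rate * a * clipped_lyap (x k \<omega>) powr (p - 1)" using a drift_rate_pos by simp
        moreover have "clipped_lyap (x k \<omega>) powr p \<le> D powr p" using powr_clipped_lyap_le p_gt by simp
        moreover have "0 \<le> clipped_lyap (x k \<omega>) powr p" "0 \<le> drift_rate * D powr (p - 1)"
          using drift_rate_pos by simp_all
        moreover have "Z \<omega> = clipped_lyap (x k \<omega>) powr p - drift_rate * a * clipped_lyap (x k \<omega>) powr (p - 1)
            \<or> Z \<omega> = clipped_lyap (x k \<omega>) powr p"
          unfolding Z_def by simp
        ultimately show "norm (Z \<omega>) \<le> D powr p + drift_rate * D powr (p - 1)"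
          unfolding real_norm_def abs_le_iff by linarith
      qed
    qed (unfold Z_def, measurable)
    show "Z \<in> borel_measurable F" unfolding Z_def by measurable
    show "(\<lambda>\<omega>. a *\<^sub>R clipped_pow_grad (x k \<omega>)) \<in> borel_measurable F" by measurable
    show "\<kappa> \<in> borel_measurable F" unfolding \<kappa>_def by measurable
    show "norm (a *\<^sub>R clipped_pow_grad (x k \<omega>)) \<le> p * D powr (p - 1) * sqrt (2 * L2) / 2" for \<omega>
      using norm_clipped_pow_grad_le[of "x k \<omega>"] a mult_left_le_one_le[of "norm (clipped_pow_grad (x k \<omega>))" a] by simp
    show "AE \<omega> in M. nn_cond_exp M F (\<lambda>\<omega>. ennreal (1 + norm (w k \<omega>) powr p)) \<omega> \<le> ennreal (m \<omega>)"
    proof -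
      have split: "(\<lambda>\<omega>. ennreal (1 + norm (w k \<omega>) powr p)) = (\<lambda>\<omega>. 1 + ennreal (norm (w k \<omega>) powr p))"
        by (simp add: ennreal_plus fun_eq_iff)
      have "AE \<omega> in M. nn_cond_exp M F (\<lambda>_. 1) \<omega> + nn_cond_exp M F (\<lambda>\<omega>. ennreal (norm (w k \<omega>) powr p)) \<omega>
          = nn_cond_exp M F (\<lambda>\<omega>. 1 + ennreal (norm (w k \<omega>) powr p)) \<omega>"
        by (rule F.nn_cond_exp_sum) measurable
      moreover have "AE \<omega> in M. 1 = nn_cond_exp M F (\<lambda>_. 1) \<omega>" by (rule F.nn_cond_exp_F_meas) simp
      moreover note moment[folded F_def]
      ultimately show ?thesis unfolding m_def split
      proof eventually_elim
        case (elim \<omega>)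
        have "nn_cond_exp M F (\<lambda>\<omega>. 1 + ennreal (norm (w k \<omega>) powr p)) \<omega>
            = 1 + nn_cond_exp M F (\<lambda>\<omega>. ennreal (norm (w k \<omega>) powr p)) \<omega>"
          using elim(1,2) by simp
        also have "\<dots> \<le> 1 + ennreal (A + B * norm (x k \<omega> - xstar) powr p)"
          using elim(3) by (rule add_left_mono)
        also have "\<dots> = ennreal (1 + (A + B * norm (x k \<omega> - xstar) powr p))"
          using AB by (simp add: ennreal_plus)
        finally show ?case .
      qed
    qed
    show "integrable M (\<lambda>\<omega>. \<kappa> \<omega> * m \<omega>)"
    proof (rule integrable_const_bound[where B = "K * (D powr (p - 2) + 1) * (1 + moment_bound A B)"])
      show "AE \<omega> in M. norm (\<kappa> \<omega> * m \<omega>) \<le> K * (D powr (p - 2) + 1) * (1 + moment_bound A B)"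
      proof (intro AE_I2)
        fix \<omega>
        show "norm (\<kappa> \<omega> * m \<omega>) \<le> K * (D powr (p - 2) + 1) * (1 + moment_bound A B)"
        proof (cases "lyap_sqrt (x k \<omega>) \<le> 2 * D")
          case True
          have "a\<^sup>2 * clipped_lyap (x k \<omega>) powr (p - 2) + a powr p \<le> 1 * D powr (p - 2) + 1"
            using a p_gt powr_clipped_lyap_le[of "p - 2" "x k \<omega>"]
            by (intro add_mono mult_mono powr_le1) (auto simp: power_le_one)
          then have "\<kappa> \<omega> \<le> K * (D powr (p - 2) + 1)" unfolding \<kappa>_def using True K by simp
          moreover have "m \<omega> \<le> 1 + moment_bound A B" unfolding m_def using moment_bound_ge[OF AB(2) True] by simp
          moreover have "0 \<le> m \<omega>" unfolding m_def using AB by simp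
          ultimately show ?thesis using \<kappa>_nonneg[of \<omega>] by (simp add: mult_mono)
        qed (use K moment_bound_nonneg[OF AB] p_gt in \<open>simp add: \<kappa>_def\<close>)
      qed
    qed (simp add: \<kappa>_def m_def)
    show "clipped_lyap (x (Suc k) \<omega>) powr p
        \<le> Z \<omega> + inner (a *\<^sub>R clipped_pow_grad (x k \<omega>)) (w k \<omega>) + \<kappa> \<omega> * (1 + norm (w k \<omega>) powr p)"
      if "\<omega> \<in> space M" for \<omega>
    proof (cases "lyap_sqrt (x k \<omega>) \<le> 2 * D")
      case True
      have "clipped_lyap (x (Suc k) \<omega>) powr p \<le> step_majorant K a (x k \<omega>) (w k \<omega>)"
        using rec that step[OF a True] unfolding a_def by simp
      then show ?thesis using True unfolding step_majorant_def Z_def \<kappa>_def by (simp add: algebra_simps)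
    next
      case False
      then show ?thesis
        using rec that clipped_step_far[of "x k \<omega>"] unfolding Z_def \<kappa>_def clipped_pow_grad_def by simp
    qed
  qed (use w_int centred AB K p_gt in \<open>auto simp: F_def m_def \<kappa>_def\<close>)
  moreover have "Z \<omega> + \<kappa> \<omega> * m \<omega> \<le> clipped_lyap (x k \<omega>) powr p + clip_noise_const K A B * \<alpha> k powr p" for \<omega>
    using drift_absorbs_remainder[OF K a(1) _ AB, of "x k \<omega>"] clip_noise_const_pos[OF K AB]
    unfolding Z_def \<kappa>_def m_def a_def by auto
  ultimately show ?thesis unfolding F_def[symmetric]
    by (elim eventually_mono) (meson ennreal_leI order_trans)
qed

end

theorem mainTheorem16:
  fixes H :: "'a::euclidean_space \<Rightarrow> 'a"
    and xstar :: 'a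
    and Phi :: "'a \<Rightarrow> real"
    and gradPhi :: "'a \<Rightarrow> 'a"
    and eta c1 c2 L2 p A B C D :: real
  assumes p_gt: "p > 2"
    and fix_pt: "H xstar = xstar"
    and Phi_nonneg: "\<And>x. Phi x \<ge> 0"
    and Phi_grad: "\<And>x. GDERIV Phi x :> gradPhi x"
    and consts_pos: "eta > 0" "c1 > 0" "c2 > 0" "L2 > 0"
    and drift: "\<And>x. inner (gradPhi (x - xstar)) (H x - x) \<le> - eta * Phi (x - xstar)"
    and smooth: "\<And>x y. Phi y \<le> Phi x + inner (gradPhi x) (y - x) + L2 / 2 * (norm (y - x))\<^sup>2"
    and sandwich: "\<And>x. c1 * (norm (x - xstar))\<^sup>2 \<le> Phi (x - xstar) \<and> Phi (x - xstar) \<le> c2 * (norm (x - xstar))\<^sup>2"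
    and A_pos: "A > 0" and B_nonneg: "B \<ge> 0"
    and C_pos: "C > 0" and lipschitz: "\<And>x y. norm (H x - H y) \<le> C * norm (x - y)"
    and D_pos: "D > 0"
  shows "\<exists>abar > 0. \<exists>b4 > 0.
    \<forall>(M :: 'b measure) (x :: nat \<Rightarrow> 'b \<Rightarrow> 'a) (w :: nat \<Rightarrow> 'b \<Rightarrow> 'a) (\<alpha> :: nat \<Rightarrow> real).
      ( prob_space M
      \<and> x 0 \<in> borel_measurable M
      \<and> (\<forall>k. w k \<in> borel_measurable M)
      \<and> (\<forall>k. \<alpha> k > 0)
      \<and> (\<forall>k. \<forall>\<omega>\<in>space M. x (Suc k) \<omega> = x k \<omega> + \<alpha> k *\<^sub>R (H (x k \<omega>) - x k \<omega> + w k \<omega>))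
      \<and> (\<forall>k. integrable M (w k))
      \<and> (\<forall>k. \<forall>i\<in>Basis. AE \<omega> in M.
            real_cond_exp M (nat_filtration M x k) (\<lambda>\<omega>. inner (w k \<omega>) i) \<omega> = 0)
      \<and> (\<forall>k. AE \<omega> in M.
            nn_cond_exp M (nat_filtration M x k) (\<lambda>\<omega>. ennreal (norm (w k \<omega>) powr p)) \<omega>
              \<le> ennreal (A + B * norm (x k \<omega> - xstar) powr p)) )
      \<longrightarrow> (\<forall>k. \<alpha> k \<le> abar \<longrightarrow>
            (AE \<omega> in M.
              nn_cond_exp M (nat_filtration M x k)
                (\<lambda>\<omega>. ennreal (clipz D (sqrt (Phi (x (Suc k) \<omega> - xstar))) powr p)) \<omega>
              \<le> ennreal (clipz D (sqrt (Phi (x k \<omega> - xstar))) powr p + b4 * \<alpha> k powr p)))"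
proof -
  interpret lyapunov_drift H xstar Phi gradPhi eta c1 c2 L2 p C D
    by unfold_locales (use assms in auto)
  obtain K where K: "0 < K"
    and step: "\<And>y v \<alpha>. 0 < \<alpha> \<Longrightarrow> \<alpha> \<le> 1 \<Longrightarrow> lyap_sqrt y \<le> 2 * D \<Longrightarrow>
           clipped_lyap (y + \<alpha> *\<^sub>R (H y - y + v)) powr p \<le> step_majorant K \<alpha> y v"
    using clipped_step_bound by blast
  note cond_step = clipped_cond_step[OF K step less_imp_le[OF A_pos] B_nonneg]
  show ?thesis
  proof (rule exI[of _ 1], intro conjI exI[of _ "clip_noise_const K A B"] allI impI)
    show "(0::real) < 1" by simp
    show "0 < clip_noise_const K A B" using clip_noise_const_pos[OF K] A_pos B_nonneg by simp
  qed (use cond_step[unfolded clipped_lyap_def lyap_sqrt_def] in blast)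
qed

end
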